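(* Let $(X,\Sigma)$ be a measurable space, $(\mathcal{E}_t)_{t\ge0}$ a process of pavings, $\boldsymbol{\mu}=(\mu_t)_{t\ge0}$ a family of monotone measures on $\Sigma$, and $\mathscr{A}=\{\mathsf{A}_t(\cdot|E)\colon E\in\mathcal{E}_t,\,t\ge0\}$ an idempotent parametric family of conditional aggregation operators. Then for every $\lambda>0$ and every $t\ge0$, $$\boldsymbol{\mu}_{\mathscr{A}}(\lambda\mathbf{1}_X,t)=\sup\{\mu_t(E)\colon E\in\mathcal{E}_t\}\cdot\mathbf{1}_{[0,\lambda]}(t).$$ In particular, $\boldsymbol{\mu}_{\mathscr{A}}(\lambda\mathbf{1}_X,t)=\mu_t(X)\mathbf{1}_{[0,\lambda]}(t)$ if $X\in\mathcal{E}_t$.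
   Context: Convention: $\infty\cdot 0=0$. $\Sigma^0=\Sigma\setminus\{\emptyset\}$. $\mathbf{F}$ denotes the set of all $\Sigma$-measurable, nonnegative, bounded functions $f\colon X\to[0,\infty)$. A monotone measure is a map $\mu\colon\Sigma\to[0,\infty]$ with $\mu(B)\le\mu(C)$ whenever $B\subseteq C$, $\mu(\emptyset)=0$ and $\mu(X)>0$. For $E\in\Sigma^0$, a conditional aggregation operator (CAO) w.r.t. $E$ is a map $\mathsf{A}(\cdot|E)\colon\mathbf{F}\to[0,\infty]$ such that (C1) $\mathsf{A}(f|E)\le\mathsf{A}(g|E)$ whenever $f(x)\le g(x)$ for all $x\in E$, and (C2) $\mathsf{A}(\mathbf{1}_{X\setminus E}|E)=0$. A process of pavings is a family $(\mathcal{E}_t)_{t\ge0}$ with $\emptyset\in\mathcal{E}_t\subseteq\Sigma$ for all $t$; $\mathcal{E}_t^0=\mathcal{E}_t\setminus\{\emptyset\}$. A parametric family of CAOs (pFCA) $\{\mathsf{A}_t(\cdot|E)\colon E\in\mathcal{E}_t,\,t\ge0\}$ consists of CAOs $\mathsf{A}_t(\cdot|E)$ w.r.t. $E$ for each $t$ and $E\in\mathcal{E}_t^0$, with the convention $\mathsf{A}_t(\cdot|\emptyset)=\infty$. The pFCA is idempotent if $\mathsf{A}_t(b\mathbf{1}_X|E)=b$ for all $b\in(0,\infty)$, all $t\ge0$ and all $E\in\mathcal{E}_t^0$. The generalized level measure is $\boldsymbol{\mu}_{\mathscr{A}}(f,t)=\sup\{\mu_t(E)\colon \mathsf{A}_t(f|E)\ge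 t,\ E\in\mathcal{E}_t\}$ for $t\ge0$. *)

theory Defs
  imports "HOL-Analysis.Analysis"
begin

text \<open>The measurable space (X, Sigma) is a measure M with X = space M, Sigma = sets M.
  Functions are real-valued on the whole type; only their values on X matter.\<close>

definition bnd_nonneg_meas :: "'a measure \<Rightarrow> ('a \<Rightarrow> real) set" where
  "bnd_nonneg_meas M = {f. f \<in> borel_measurable M \<and> (\<forall>x\<in>space M. 0 \<le> f x)
      \<and> (\<exists>c. \<forall>x\<in>space M. f x \<le> c)}"

definition monotone_measure :: "'a measure \<Rightarrow> ('a set \<Rightarrow> ennreal) \<Rightarrow> bool" where
  "monotone_measure M \<mu> \<longleftrightarrow>
     (\<forall>B\<in>sets M. \<forall>C\<in>sets M. B \<subseteq> C \<longrightarrow> \<mu> B \<le> \<mu> C) \<and> \<mu> {} = 0 \<and> \<mu> (space M) > 0"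

definition CAO :: "'a measure \<Rightarrow> 'a set \<Rightarrow> (('a \<Rightarrow> real) \<Rightarrow> ennreal) \<Rightarrow> bool" where
  "CAO M E A \<longleftrightarrow>
     (\<forall>f\<in>bnd_nonneg_meas M. \<forall>g\<in>bnd_nonneg_meas M.
        (\<forall>x\<in>E. f x \<le> g x) \<longrightarrow> A f \<le> A g) \<and>
     A (indicator (space M - E)) = 0"

definition paving_process :: "'a measure \<Rightarrow> (real \<Rightarrow> 'a set set) \<Rightarrow> bool" where
  "paving_process M \<E> \<longleftrightarrow> (\<forall>t\<ge>0. {} \<in> \<E> t \<and> \<E> t \<subseteq> sets M)"

definition pFCA :: "'a measure \<Rightarrow> (real \<Rightarrow> 'a set set)
      \<Rightarrow> (real \<Rightarrow> 'a set \<Rightarrow> ('a \<Rightarrow> real) \<Rightarrow> ennreal) \<Rightarrow> bool" where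
  "pFCA M \<E> A \<longleftrightarrow>
     (\<forall>t\<ge>0. \<forall>E\<in>\<E> t. E \<noteq> {} \<longrightarrow> CAO M E (A t E)) \<and>
     (\<forall>t\<ge>0. \<forall>f. A t {} f = \<infinity>)"

definition idempotent_pFCA :: "(real \<Rightarrow> 'a set set)
      \<Rightarrow> (real \<Rightarrow> 'a set \<Rightarrow> ('a \<Rightarrow> real) \<Rightarrow> ennreal) \<Rightarrow> bool" where
  "idempotent_pFCA \<E> A \<longleftrightarrow>
     (\<forall>b>0. \<forall>t\<ge>0. \<forall>E\<in>\<E> t. E \<noteq> {} \<longrightarrow> A t E (\<lambda>x. b) = ennreal b)"

definition gen_level_measure ::
  "(real \<Rightarrow> 'a set set) \<Rightarrow> (real \<Rightarrow> 'a set \<Rightarrow> ennreal)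
     \<Rightarrow> (real \<Rightarrow> 'a set \<Rightarrow> ('a \<Rightarrow> real) \<Rightarrow> ennreal) \<Rightarrow> ('a \<Rightarrow> real) \<Rightarrow> real \<Rightarrow> ennreal" where
  "gen_level_measure \<E> \<mu> A f t = Sup {\<mu> t E | E. E \<in> \<E> t \<and> A t E f \<ge> ennreal t}"

end

theory Submission
  imports Defs
begin

text \<open>By idempotency every nonempty \<open>E\<close> aggregates the constant \<open>\<lambda>\<close> to \<open>\<lambda>\<close>, while the empty
  set aggregates it to \<open>\<infinity>\<close> but has measure \<open>0\<close>. So the level set at \<open>t\<close> is the whole paving
  for \<open>t \<le> \<lambda>\<close> and just \<open>{\<emptyset>}\<close> for \<open>t > \<lambda>\<close>.\<close>

lemma gen_level_measure_eq_SUP: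
  "gen_level_measure \<E> \<mu> A f t = (SUP E \<in> {E \<in> \<E> t. ennreal t \<le> A t E f}. \<mu> t E)"
  unfolding gen_level_measure_def by (simp add: image_def) (metis (lifting))

lemma SUP_monotone_measure_eq_space:
  assumes "monotone_measure M \<nu>" and "\<E> \<subseteq> sets M" and "space M \<in> \<E>"
  shows "(SUP E\<in>\<E>. \<nu> E) = \<nu> (space M)"
proof (rule antisym)
  show "(SUP E\<in>\<E>. \<nu> E) \<le> \<nu> (space M)"
  proof (rule SUP_least)
    fix E assume "E \<in> \<E>"
    with assms(2) have "E \<in> sets M" by auto
    then show "\<nu> E \<le> \<nu> (space M)"
      using assms(1) sets.sets_into_space sets.top unfolding monotone_measure_def by blast
  qed
  show "\<nu> (space M) \<le> (SUP E\<in>\<E>. \<nu> E)"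
    using assms(3) by (rule SUP_upper)
qed

lemma gen_level_measure_const:
  assumes empty_in: "{} \<in> \<E> t" and empty_null: "\<mu> t {} = 0"
    and empty_aggr: "A t {} (\<lambda>x. lam) = \<infinity>"
    and nonempty_aggr: "\<And>E. E \<in> \<E> t \<Longrightarrow> E \<noteq> {} \<Longrightarrow> A t E (\<lambda>x. lam) = ennreal lam"
    and "0 \<le> lam" and "0 \<le> t"
  shows "gen_level_measure \<E> \<mu> A (\<lambda>x. lam) t = (SUP E\<in>\<E> t. \<mu> t E) * indicator {0..lam} t"
proof (cases "t \<le> lam")
  case True
  have "{E \<in> \<E> t. ennreal t \<le> A t E (\<lambda>x. lam)} = \<E> t"
  proof (intro equalityI subsetI CollectI conjI)
    fix E assume "E \<in> \<E> t"
    then show "ennreal t \<le> A t E (\<lambda>x. lam)"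
      using empty_aggr nonempty_aggr True by (cases "E = {}") (auto simp: ennreal_leI)
  qed auto
  then show ?thesis
    using True \<open>0 \<le> t\<close> by (simp add: gen_level_measure_eq_SUP)
next
  case False
  have "{E \<in> \<E> t. ennreal t \<le> A t E (\<lambda>x. lam)} = {{}}"
  proof (intro equalityI subsetI)
    fix E assume "E \<in> {E \<in> \<E> t. ennreal t \<le> A t E (\<lambda>x. lam)}"
    moreover have "\<not> ennreal t \<le> ennreal lam"
      using False \<open>0 \<le> lam\<close> by (simp add: ennreal_le_iff)
    ultimately show "E \<in> {{}}"
      using nonempty_aggr by fastforce
  qed (use empty_in empty_aggr in auto)
  then show ?thesis
    using False empty_null by (simp add: gen_level_measure_eq_SUP)
qed

theorem proposition3p8:
  fixes M :: "'a measure" and \<E> :: "real \<Rightarrow> 'a set set"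
    and \<mu> :: "real \<Rightarrow> 'a set \<Rightarrow> ennreal"
    and A :: "real \<Rightarrow> 'a set \<Rightarrow> ('a \<Rightarrow> real) \<Rightarrow> ennreal"
    and lam t :: real
  assumes "paving_process M \<E>"
    and "\<forall>s\<ge>0. monotone_measure M (\<mu> s)"
    and "pFCA M \<E> A"
    and "idempotent_pFCA \<E> A"
    and "lam > 0" and "t \<ge> 0"
  shows "gen_level_measure \<E> \<mu> A (\<lambda>x. lam) t
           = (SUP E\<in>\<E> t. \<mu> t E) * indicator {0..lam} t
     \<and> (space M \<in> \<E> t \<longrightarrow>
           gen_level_measure \<E> \<mu> A (\<lambda>x. lam) t = \<mu> t (space M) * indicator {0..lam} t)"
proof -
  have paving: "{} \<in> \<E> t" "\<E> t \<subseteq> sets M"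
    using assms(1,6) unfolding paving_process_def by auto
  have monotone: "monotone_measure M (\<mu> t)"
    using assms(2,6) by auto
  have level: "gen_level_measure \<E> \<mu> A (\<lambda>x. lam) t = (SUP E\<in>\<E> t. \<mu> t E) * indicator {0..lam} t"
  proof (rule gen_level_measure_const)
    show "\<mu> t {} = 0"
      using monotone unfolding monotone_measure_def by auto
    show "A t {} (\<lambda>x. lam) = \<infinity>"
      using assms(3,6) unfolding pFCA_def by auto
    show "A t E (\<lambda>x. lam) = ennreal lam" if "E \<in> \<E> t" "E \<noteq> {}" for E
      using assms(4-6) that unfolding idempotent_pFCA_def by auto
  qed (use paving assms(5,6) in auto)
  then show ?thesis
    using SUP_monotone_measure_eq_space[OF monotone paving(2)] by simp
qed

end
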